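(* Let $M$ be an equidecomposable magma, let $P$ be a polynomial over $M$ in $n$ variables, and let $k\in M$. Then the equation $P(x_1,\ldots,x_n)=k$ has at most one solution $(x_1,\ldots,x_n)\in M^n$.
   Context: A magma is a set with a binary operation $+$; it is equidecomposable if $x+y=x'+y'$ implies $x=x'$ and $y=y'$. A polynomial over $M$ in the $n$ variables $x_1,\ldots,x_n$ is given by a term $P$ of the free magma on the variable set, i.e. a fully parenthesized formal sum built from variables, in which the variables occurring are exactly $x_1,\ldots,x_n$; it defines the map $M^n\to M$ obtained by substituting elements of $M$ for the variables and evaluating with $+$ (recursively: a single variable gives the identity/projection, and if $P=Q+R$ then $P(\ldots)=Q(\ldots)+R(\ldots)$ with each summand evaluated on the variables occurring in it). *)

theory Defs
  imports Main
begin

text \<open>Terms of the free magma over a set of variables (fully parenthesized formal sums).\<close>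
datatype 'v mterm = Var 'v | Sum "'v mterm" "'v mterm"

fun vars :: "'v mterm \<Rightarrow> 'v set" where
  "vars (Var v) = {v}"
| "vars (Sum p q) = vars p \<union> vars q"

fun eval :: "'v mterm \<Rightarrow> ('v \<Rightarrow> 'a::plus) \<Rightarrow> 'a" where
  "eval (Var v) x = x v"
| "eval (Sum p q) x = eval p x + eval q x"

definition equidecomposable :: "'a::plus itself \<Rightarrow> bool" where
  "equidecomposable _ \<longleftrightarrow> (\<forall>x y x' y' :: 'a. x + y = x' + y' \<longrightarrow> x = x' \<and> y = y')"

end

theory Submission
  imports Defs
begin

lemma equidecomposableD:
  assumes "equidecomposable TYPE('a::plus)" and "(a::'a) + b = a' + b'"
  shows "a = a'" and "b = b'"
  using assms unfolding equidecomposable_def by blast+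

lemma eval_eq_imp_eq_on_vars:
  fixes x y :: "'v \<Rightarrow> 'a::plus"
  assumes equidec: "equidecomposable TYPE('a)"
  shows "eval P x = eval P y \<Longrightarrow> \<forall>v\<in>vars P. x v = y v"
proof (induction P)
  case (Var v)
  then show ?case by simp
next
  case (Sum p q)
  from Sum.prems have "eval p x + eval q x = eval p y + eval q y" by simp
  from equidecomposableD[OF equidec this] Sum.IH show ?case by auto
qed

theorem proposition3p5:
  fixes P :: "nat mterm" and n :: nat and k :: "'a::plus" and x y :: "nat \<Rightarrow> 'a"
  assumes "equidecomposable TYPE('a)"
    and "vars P = {..<n}"
    and "eval P x = k" and "eval P y = k"
  shows "\<forall>i<n. x i = y i"
proof -
  from assms(3,4) have "eval P x = eval P y" by simp
  with assms(1) have "\<forall>v\<in>vars P. x v = y v" by (rule eval_eq_imp_eq_on_vars)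
  with assms(2) show ?thesis by simp
qed

end
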